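(* Consider searching on a line with turn cost $t\ge0$ and lower bound $\lambda>0$ (defined in the context), and suppose $\frac{t}{2\lambda}\le1$. Let $s=\frac{t}{2\lambda}$. Then the periodic strategy with distances $$x_i=\Big(\big((1-s)\,i+(1+s)\big)2^i-s\Big)\lambda,\qquad i\ge1,$$ has competitive ratio $9$, and it is optimal (no search strategy has competitive ratio less than $9$).
   Context: Searching on a line with turn cost. Fix $\lambda>0$, $t\ge 0$. A search strategy is a sequence $\mathcal S(i)=(x_i,r_i)$, $i\ge1$, with $x_i>0$, $r_i\in\{\mathrm{left},\mathrm{right}\}$ and $\sup\{x_i:r_i=\mathrm{left}\}=\sup\{x_i:r_i=\mathrm{right}\}=\infty$. At step $i$ the searcher walks distance $x_i$ from the origin along ray $r_i$ and, if the target is not found, walks back to the origin, paying an additional turn cost $t$; thus each unsuccessful step costs $2x_i+t$. The target is on one of the two rays at unknown distance $D\ge\lambda$ and is found at the first step $j$ with $r_j$ equal to its ray and $x_j\ge D$; the total cost is then $\sum_{i=1}^{j-1}(2x_i+t)+D$. The competitive ratio of $\mathcal S$ is the supremum over all target positions of total cost divided by $D$; a strategy is optimal if its competitive ratio is minimal among all search strategies. A periodic strategy with distances $x_i$ means $r_1\ne r_2$ and $r_{i+2}=r_i$ (the rays alternate). For a periodic strategy with increasing distances the competitive ratio equals $\max\Big\{\frac{2x_1+t+\lambda}{\lambda},\ \sup_{n\ge1}\frac{\sum_{i=1}^{n+1}(2x_i+t)+x_n}{x_n}\Big\}$. *)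

theory Defs
  imports Complex_Main "HOL-Library.Extended_Real"
begin

text \<open>Rays are encoded as booleans (True = right, False = left).
A strategy is a pair of sequences x, r indexed from 1 (index 0 is ignored).\<close>

definition is_strategy :: "(nat \<Rightarrow> real) \<Rightarrow> (nat \<Rightarrow> bool) \<Rightarrow> bool" where
  "is_strategy x r \<longleftrightarrow> (\<forall>i\<ge>1. x i > 0) \<and> (\<forall>\<rho> B. \<exists>i\<ge>1. r i = \<rho> \<and> B < x i)"

definition find_step :: "(nat \<Rightarrow> real) \<Rightarrow> (nat \<Rightarrow> bool) \<Rightarrow> bool \<Rightarrow> real \<Rightarrow> nat" where
  "find_step x r \<rho> D = (LEAST j. 1 \<le> j \<and> r j = \<rho> \<and> D \<le> x j)"

definition search_cost :: "real \<Rightarrow> (nat \<Rightarrow> real) \<Rightarrow> (nat \<Rightarrow> bool) \<Rightarrow> bool \<Rightarrow> real \<Rightarrow> real" where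
  "search_cost t x r \<rho> D = (\<Sum>i = 1..<find_step x r \<rho> D. 2 * x i + t) + D"

definition comp_ratio :: "real \<Rightarrow> real \<Rightarrow> (nat \<Rightarrow> real) \<Rightarrow> (nat \<Rightarrow> bool) \<Rightarrow> ereal" where
  "comp_ratio lam t x r = (SUP p \<in> {(\<rho>, D). lam \<le> D}. ereal (search_cost t x r (fst p) (snd p) / snd p))"

definition periodic_rays :: "(nat \<Rightarrow> bool) \<Rightarrow> bool" where
  "periodic_rays r \<longleftrightarrow> r 1 \<noteq> r 2 \<and> (\<forall>i\<ge>1. r (i + 2) = r i)"

end

theory Submission
  imports Defs
begin

(* For the distances x_i = (((1-s) i + (1+s)) 2^i - s) lam (with x_0 = lam)
   the cost of the first n+1 excursions telescopes: sum_{i=1}^{n+1} (2 x_i + t) = 8 x_n.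
   A target found at step n+2 lies beyond x_n, the previous excursion on its ray, so its
   cost is 8 x_n + D <= 9 D; the target at distance lam on the second ray costs exactly 9 lam.

   For an arbitrary strategy let m_n be the smaller of the two distances
   explored on the two rays after n steps, and U_n the sum of the values m_n takes at the
   steps where m_n increases ("jumps").  If every ratio is at most C < 9, a target just
   beyond m_n shows sum_{i<=n} x_i <= a max(m_n, lam) with a = (C-1)/2 < 4, hence
   U_{n+1} <= a (U_n - P_n) at each jump, where P_n = U_n - m_n is the jump total before the
   last jump.  An abstract lemma about such pairs of sequences shows this is impossible:
   the ratio U_n / P_n is >= 1, never increases, and drops by a fixed amount at each of the
   infinitely many jumps. *)

lemma find_step_spec:
  assumes "\<exists>j\<ge>1. r j = \<rho> \<and> D \<le> x j"
  shows "1 \<le> find_step x r \<rho> D" "r (find_step x r \<rho> D) = \<rho>" "D \<le> x (find_step x r \<rho> D)"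
    and "\<And>k. k < find_step x r \<rho> D \<Longrightarrow> 1 \<le> k \<Longrightarrow> r k = \<rho> \<Longrightarrow> x k < D"
proof -
  have "1 \<le> find_step x r \<rho> D \<and> r (find_step x r \<rho> D) = \<rho> \<and> D \<le> x (find_step x r \<rho> D)"
    unfolding find_step_def using assms by (rule LeastI_ex)
  then show "1 \<le> find_step x r \<rho> D" "r (find_step x r \<rho> D) = \<rho>" "D \<le> x (find_step x r \<rho> D)"
    by auto
  fix k assume "k < find_step x r \<rho> D" "1 \<le> k" "r k = \<rho>"
  then show "x k < D" unfolding find_step_def using not_less_Least by fastforce
qed

lemma strategy_reaches:
  assumes "is_strategy x r"
  shows "\<exists>j\<ge>1. r j = \<rho> \<and> D \<le> x j"
  using assms unfolding is_strategy_def by (meson less_imp_le)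

lemma comp_ratio_le:
  assumes "\<And>\<rho> D. lam \<le> D \<Longrightarrow> search_cost t x r \<rho> D / D \<le> C"
  shows "comp_ratio lam t x r \<le> ereal C"
  unfolding comp_ratio_def by (rule SUP_least) (auto intro: assms)

lemma ratio_le_comp_ratio:
  assumes "lam \<le> D"
  shows "ereal (search_cost t x r \<rho> D / D) \<le> comp_ratio lam t x r"
  unfolding comp_ratio_def by (rule SUP_upper2[of "(\<rho>, D)"]) (use assms in auto)

section \<open>The periodic doubling strategy\<close>

lemma periodic_rays_parity:
  assumes "periodic_rays r" "i \<ge> 1"
  shows "r i = (if odd i then r 1 else r 2)"
proof -
  have period: "r (i + 2) = r i" if "i \<ge> 1" for i
    using assms(1) that unfolding periodic_rays_def by simp
  have "r (2 * k + 1) = r 1 \<and> r (2 * k + 2) = r 2" for k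
  proof (induction k)
    case (Suc k)
    then show ?case using period[of "2 * k + 1"] period[of "2 * k + 2"] by simp
  qed (simp add: numeral_2_eq_2)
  moreover have "\<exists>k. i = 2 * k + 2" if "even i"
  proof -
    obtain m where "i = 2 * m" using \<open>even i\<close> by (rule evenE)
    with assms(2) have "i = 2 * (m - 1) + 2" by simp
    then show ?thesis by blast
  qed
  ultimately show ?thesis by (cases "odd i") (auto elim!: oddE)
qed

text \<open>The distances of the strategy in the theorem; the value at index 0 is lam, the
  distance of the nearest possible target.\<close>
definition doubling_dist :: "real \<Rightarrow> real \<Rightarrow> nat \<Rightarrow> real" where
  "doubling_dist lam s i = (((1 - s) * real i + (1 + s)) * 2 ^ i - s) * lam"

lemma doubling_dist_ge:
  assumes "lam > 0" "0 \<le> s" "s \<le> 1"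
  shows "real i * lam \<le> doubling_dist lam s i"
proof -
  have "real i + 1 \<le> 2 ^ i"
  proof -
    have "Suc i \<le> 2 ^ i" using less_exp[of i] by (rule Suc_leI)
    then have "real (Suc i) \<le> real (2 ^ i)" by (simp only: of_nat_le_iff)
    then show ?thesis by simp
  qed
  moreover have "1 * 2 ^ i \<le> ((1 - s) * real i + (1 + s)) * (2::real) ^ i"
    using assms by (intro mult_right_mono) auto
  ultimately have "real i \<le> ((1 - s) * real i + (1 + s)) * 2 ^ i - s"
    using assms by linarith
  then show ?thesis unfolding doubling_dist_def using assms(1) by simp
qed

lemma doubling_dist_sum:
  "(\<Sum>i = 1..<n + 2. 2 * doubling_dist lam s i + 2 * s * lam) = 8 * doubling_dist lam s n"
proof (induction n)
  case 0
  have "{1..<(2::nat)} = {1}" by auto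
  then show ?case by (simp add: doubling_dist_def algebra_simps)
next
  case (Suc n)
  have "(\<Sum>i = 1..<Suc n + 2. 2 * doubling_dist lam s i + 2 * s * lam)
      = 8 * doubling_dist lam s n + (2 * doubling_dist lam s (n + 2) + 2 * s * lam)"
    using Suc by simp
  also have "\<dots> = 8 * doubling_dist lam s (Suc n)"
    by (simp add: doubling_dist_def algebra_simps)
  finally show ?case .
qed

text \<open>From now on the doubling distances are combined with a fixed periodic choice of rays,
  for 0 <= s <= 1; the turn cost is t = 2 s lam.\<close>
context
  fixes lam s :: real and r :: "nat \<Rightarrow> bool"
  assumes lam: "lam > 0" and s: "0 \<le> s" "s \<le> 1" and periodic: "periodic_rays r"
begin

lemma doubling_reaches: "\<exists>i\<ge>1. r i = \<rho> \<and> B < doubling_dist lam s i"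
proof -
  obtain k :: nat where "B < real k * lam"
    using reals_Archimedean2[of "B / lam"] lam by (auto simp: field_simps)
  moreover have "real k * lam \<le> real i * lam" if "k \<le> i" for i
    using lam that by simp
  ultimately have far: "B < doubling_dist lam s i" if "k \<le> i" for i
    using doubling_dist_ge[OF lam s, of i] that by fastforce
  have "r 2 = (\<not> r 1)" using periodic unfolding periodic_rays_def by auto
  then have "\<rho> = r (2 * k + 1) \<or> \<rho> = r (2 * k + 2)"
    using periodic_rays_parity[OF periodic, of "2 * k + 1"]
      periodic_rays_parity[OF periodic, of "2 * k + 2"] by auto
  moreover have "B < doubling_dist lam s (2 * k + 1)" "B < doubling_dist lam s (2 * k + 2)"
    by (auto intro: far)
  ultimately show ?thesis
  proof (elim disjE)
    assume "\<rho> = r (2 * k + 1)"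
    then show ?thesis using \<open>B < doubling_dist lam s (2 * k + 1)\<close> by fastforce
  next
    assume "\<rho> = r (2 * k + 2)"
    then show ?thesis using \<open>B < doubling_dist lam s (2 * k + 2)\<close> by fastforce
  qed
qed

lemma doubling_is_strategy: "is_strategy (doubling_dist lam s) r"
proof -
  have "doubling_dist lam s i > 0" if "i \<ge> 1" for i
  proof -
    have "0 < real i * lam" using lam that by simp
    then show ?thesis using doubling_dist_ge[OF lam s, of i] by linarith
  qed
  then show ?thesis unfolding is_strategy_def using doubling_reaches by auto
qed

text \<open>A target found at step n+2 lies beyond x_n (the previous excursion on its ray,
  or lam if n = 0), so it costs 8 x_n + D <= 9 D.\<close>
lemma doubling_ratio_le:
  assumes "lam \<le> D"
  shows "search_cost (2 * s * lam) (doubling_dist lam s) r \<rho> D / D \<le> 9"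
proof -
  note F = find_step_spec[OF strategy_reaches[OF doubling_is_strategy, of \<rho> D]]
  define j where "j = find_step (doubling_dist lam s) r \<rho> D"
  have D: "D > 0" using assms lam by linarith
  show ?thesis
  proof (cases "j = 1")
    case True
    then show ?thesis using D unfolding search_cost_def j_def[symmetric] by simp
  next
    case False
    define n where "n = j - 2"
    have n: "j = n + 2" using F(1) False unfolding j_def[symmetric] n_def by simp
    have "doubling_dist lam s n \<le> D"
    proof (cases "n = 0")
      case True then show ?thesis using assms by (simp add: doubling_dist_def)
    next
      case False
      then have "r n = \<rho>" using periodic F(2) n unfolding periodic_rays_def j_def by simp
      then show ?thesis using F(4)[of n] False n unfolding j_def by fastforce
    qed
    moreover have
      "search_cost (2 * s * lam) (doubling_dist lam s) r \<rho> D = 8 * doubling_dist lam s n + D"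
      unfolding search_cost_def j_def[symmetric] n doubling_dist_sum ..
    ultimately show ?thesis using D by (simp add: divide_simps)
  qed
qed

text \<open>The target at distance lam on the ray searched second is found only at step 2.\<close>
lemma doubling_ratio_attained:
  "search_cost (2 * s * lam) (doubling_dist lam s) r (r 2) lam / lam = 9"
proof -
  have x2: "lam \<le> doubling_dist lam s 2" using doubling_dist_ge[OF lam s, of 2] lam by simp
  then have "\<exists>j\<ge>1. r j = r 2 \<and> lam \<le> doubling_dist lam s j" by (intro exI[of _ 2]) auto
  note F = find_step_spec[OF this]
  define j where "j = find_step (doubling_dist lam s) r (r 2) lam"
  have "j \<noteq> 1" using F(2) periodic unfolding periodic_rays_def j_def by auto
  moreover have "\<not> 2 < j" using F(4)[of 2] x2 unfolding j_def by auto
  ultimately have "find_step (doubling_dist lam s) r (r 2) lam = 2" using F(1) unfolding j_def by linarith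
  moreover have "{1..<(2::nat)} = {1}" by auto
  ultimately have "search_cost (2 * s * lam) (doubling_dist lam s) r (r 2) lam = 9 * lam"
    unfolding search_cost_def by (simp add: doubling_dist_def algebra_simps)
  then show ?thesis using lam by simp
qed

theorem doubling_comp_ratio: "comp_ratio lam (2 * s * lam) (doubling_dist lam s) r = 9"
proof (rule antisym)
  show "comp_ratio lam (2 * s * lam) (doubling_dist lam s) r \<le> 9"
    using comp_ratio_le[of lam "2 * s * lam" "doubling_dist lam s" r 9] doubling_ratio_le by simp
  show "9 \<le> comp_ratio lam (2 * s * lam) (doubling_dist lam s) r"
    using ratio_le_comp_ratio[of lam lam "2 * s * lam" "doubling_dist lam s" r "r 2"]
      doubling_ratio_attained by simp
qed

end

section \<open>Lower bound for arbitrary strategies\<close>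

primrec reach :: "(nat \<Rightarrow> real) \<Rightarrow> (nat \<Rightarrow> bool) \<Rightarrow> bool \<Rightarrow> nat \<Rightarrow> real" where
  "reach x r \<rho> 0 = 0"
| "reach x r \<rho> (Suc n) =
     (if r (Suc n) = \<rho> then max (reach x r \<rho> n) (x (Suc n)) else reach x r \<rho> n)"

definition min_reach :: "(nat \<Rightarrow> real) \<Rightarrow> (nat \<Rightarrow> bool) \<Rightarrow> nat \<Rightarrow> real" where
  "min_reach x r n = min (reach x r True n) (reach x r False n)"

definition max_reach :: "(nat \<Rightarrow> real) \<Rightarrow> (nat \<Rightarrow> bool) \<Rightarrow> nat \<Rightarrow> real" where
  "max_reach x r n = max (reach x r True n) (reach x r False n)"

definition jump :: "(nat \<Rightarrow> real) \<Rightarrow> (nat \<Rightarrow> bool) \<Rightarrow> nat \<Rightarrow> bool" where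
  "jump x r n \<longleftrightarrow> min_reach x r n < min_reach x r (Suc n)"

primrec jump_total :: "(nat \<Rightarrow> real) \<Rightarrow> (nat \<Rightarrow> bool) \<Rightarrow> nat \<Rightarrow> real" where
  "jump_total x r 0 = 0"
| "jump_total x r (Suc n) = jump_total x r n + (if jump x r n then min_reach x r (Suc n) else 0)"

lemma reach_nonneg: "0 \<le> reach x r \<rho> n"
  by (induction n) auto

lemma reach_mono: "m \<le> n \<Longrightarrow> reach x r \<rho> m \<le> reach x r \<rho> n"
  by (rule lift_Suc_mono_le[of "reach x r \<rho>"]) auto

lemma reach_ge: "1 \<le> k \<Longrightarrow> k \<le> n \<Longrightarrow> r k = \<rho> \<Longrightarrow> x k \<le> reach x r \<rho> n"
  using reach_mono[of k n x r \<rho>] by (cases k) auto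

lemma min_reach_nonneg: "0 \<le> min_reach x r n"
  unfolding min_reach_def by (simp add: reach_nonneg)

lemma min_reach_mono: "m \<le> n \<Longrightarrow> min_reach x r m \<le> min_reach x r n"
  unfolding min_reach_def using reach_mono[of m n x r] by (meson min.mono)

text \<open>A single step enlarges the reach of only one ray, so the new minimum reach is at
  most the old maximum reach.\<close>
lemma min_reach_Suc_le_max_reach: "min_reach x r (Suc n) \<le> max_reach x r n"
  unfolding min_reach_def max_reach_def by (cases "r (Suc n)") auto

text \<open>The distance travelled pays for the current maximum reach and, separately, for every
  jump: sum x_i - max_reach >= jump_total.\<close>
lemma jump_total_le_explored:
  assumes "\<And>i. 1 \<le> i \<Longrightarrow> 0 \<le> x i"
  shows "jump_total x r n \<le> sum x {1..n} - max_reach x r n"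
proof (induction n)
  case 0 then show ?case by (simp add: max_reach_def)
next
  case (Suc n)
  define A where "A = reach x r (r (Suc n)) n"
  define B where "B = reach x r (\<not> r (Suc n)) n"
  have "0 \<le> x (Suc n)" "0 \<le> A" "0 \<le> B" using assms unfolding A_def B_def by (auto simp: reach_nonneg)
  then have key: "(if min A B < min (max A (x (Suc n))) B then min (max A (x (Suc n))) B else 0)
      \<le> x (Suc n) - max (max A (x (Suc n))) B + max A B"
    by (auto simp: max_def min_def)
  have "min_reach x r n = min A B" "max_reach x r n = max A B"
    "min_reach x r (Suc n) = min (max A (x (Suc n))) B"
    "max_reach x r (Suc n) = max (max A (x (Suc n))) B"
    unfolding min_reach_def max_reach_def A_def B_def
    by (cases "r (Suc n)"; simp add: min.commute max.commute)+
  moreover from this have "jump_total x r (Suc n) = jump_total x r n +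
      (if min A B < min (max A (x (Suc n))) B then min (max A (x (Suc n))) B else 0)"
    by (simp add: jump_def)
  moreover have "sum x {1..Suc n} = sum x {1..n} + x (Suc n)" by simp
  ultimately show ?case using Suc key by linarith
qed

text \<open>The last jump alone already contributes the current minimum reach.\<close>
lemma min_reach_le_jump_total: "min_reach x r n \<le> jump_total x r n"
proof (induction n)
  case 0 then show ?case by (simp add: min_reach_def)
next
  case (Suc n)
  have "0 \<le> jump_total x r n" using Suc min_reach_nonneg[of x r n] by linarith
  then show ?case using Suc min_reach_mono[of n "Suc n" x r] by (auto simp: jump_def)
qed

lemma no_jump_Suc:
  assumes "\<not> jump x r n"
  shows "min_reach x r (Suc n) = min_reach x r n" "jump_total x r (Suc n) = jump_total x r n"
  using assms min_reach_mono[of n "Suc n" x r] by (auto simp: jump_def)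

lemma min_reach_unbounded:
  assumes "is_strategy x r"
  shows "\<exists>n. B < min_reach x r n"
proof -
  have far: "\<exists>i\<ge>1. r i = \<rho> \<and> B < x i" for \<rho>
    using assms unfolding is_strategy_def by blast
  obtain i where i: "1 \<le> i" "r i = True" "B < x i" using far by blast
  obtain j where j: "1 \<le> j" "r j = False" "B < x j" using far by blast
  have "B < reach x r True (max i j)" "B < reach x r False (max i j)"
    using reach_ge[of i "max i j" r True x] reach_ge[of j "max i j" r False x] i j by auto
  then show ?thesis unfolding min_reach_def by auto
qed

lemma jumps_infinite:
  assumes "is_strategy x r"
  shows "\<exists>m\<ge>n. jump x r m"
proof (rule ccontr)
  assume none: "\<not> (\<exists>m\<ge>n. jump x r m)"
  have const: "min_reach x r m = min_reach x r n" if "n \<le> m" for m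
    using that by (induction m rule: dec_induct) (use none no_jump_Suc in auto)
  obtain N where N: "min_reach x r n < min_reach x r N"
    using min_reach_unbounded[OF assms] by blast
  then show False using const[of N] min_reach_mono[of N n x r] by (cases "n \<le> N") auto
qed

text \<open>If every ratio is at most C > 1, then a target just beyond the minimum reach (and
  beyond lam) is found only after all of the first n steps, which bounds their total length.\<close>
lemma prefix_bound:
  assumes strat: "is_strategy x r" and t: "t \<ge> 0" and lam: "lam > 0" and C: "C > 1"
    and bound: "\<And>\<rho> D. lam \<le> D \<Longrightarrow> search_cost t x r \<rho> D / D \<le> C"
  shows "2 * sum x {1..n} \<le> (C - 1) * max (min_reach x r n) lam"
proof -
  define \<rho> where "\<rho> = (reach x r True n \<le> reach x r False n)"
  have \<rho>: "reach x r \<rho> n = min_reach x r n"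
    unfolding \<rho>_def min_reach_def by (cases "reach x r True n \<le> reach x r False n") simp_all
  have pos: "\<And>i. 1 \<le> i \<Longrightarrow> 0 < x i" using strat unfolding is_strategy_def by auto
  have beyond: "2 * sum x {1..n} \<le> (C - 1) * D" if D: "max (min_reach x r n) lam < D" for D
  proof -
    have D_pos: "lam \<le> D" "0 < D" using D lam by auto
    note F = find_step_spec[OF strategy_reaches[OF strat, of \<rho> D]]
    define j where "j = find_step x r \<rho> D"
    have "n < j"
    proof (rule ccontr)
      assume "\<not> n < j"
      then have "x j \<le> reach x r \<rho> n" using F(1,2) reach_ge[of j n r \<rho> x] unfolding j_def by simp
      then show False using F(3) \<rho> D unfolding j_def by simp
    qed
    have "2 * sum x {1..n} = (\<Sum>i = 1..n. 2 * x i)" by (simp add: sum_distrib_left)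
    also have "\<dots> \<le> (\<Sum>i = 1..<j. 2 * x i)"
      using \<open>n < j\<close> by (intro sum_mono2) (auto intro!: less_imp_le[OF pos])
    also have "\<dots> \<le> (\<Sum>i = 1..<j. 2 * x i + t)" using t by (intro sum_mono) auto
    finally have "2 * sum x {1..n} + D \<le> search_cost t x r \<rho> D"
      unfolding search_cost_def j_def by simp
    also have "\<dots> \<le> C * D" using bound[OF D_pos(1), of \<rho>] D_pos(2) by (simp add: divide_simps)
    finally show ?thesis by (simp add: algebra_simps)
  qed
  show ?thesis
  proof (rule dense_ge)
    fix y assume "(C - 1) * max (min_reach x r n) lam < y"
    then have "max (min_reach x r n) lam < y / (C - 1)"
      using C by (simp add: pos_less_divide_eq mult.commute del: max_less_iff_conj)
    from beyond[OF this] show "2 * sum x {1..n} \<le> y" using C by simp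
  qed
qed

text \<open>For a < 4 the map Q |-> a - a/Q, which governs the ratio of consecutive jump totals,
  lies below the diagonal by a margin c/Q with c = a(4-a)/4 > 0, since Q^2 - aQ + a - c
  = (Q - a/2)^2.\<close>
lemma ratio_map_below_diagonal:
  fixes a Q :: real
  assumes "Q > 0"
  shows "a - a / Q \<le> Q - a * (4 - a) / (4 * Q)"
proof -
  have "0 \<le> (Q - a / 2)^2 / Q" using assms by simp
  also have "(Q - a / 2)^2 / Q = Q - a * (4 - a) / (4 * Q) - (a - a / Q)"
    using assms by (simp add: field_simps power2_eq_square)
  finally show ?thesis by simp
qed

lemma antitone_from:
  fixes f :: "nat \<Rightarrow> real"
  assumes "\<And>n. n0 \<le> n \<Longrightarrow> f (Suc n) \<le> f n" "n0 \<le> n" "n \<le> m"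
  shows "f m \<le> f n"
  using assms(3)
proof (induction m rule: dec_induct)
  case (step m)
  then have "f (Suc m) \<le> f m" using assms(1,2) by simp
  then show ?case using step.IH by linarith
qed simp

lemma eventually_below:
  fixes f :: "nat \<Rightarrow> real"
  assumes dec: "\<And>n. n0 \<le> n \<Longrightarrow> f (Suc n) \<le> f n"
    and drops: "\<And>n. n0 \<le> n \<Longrightarrow> \<exists>m\<ge>n. f (Suc m) \<le> f m - d" and d: "d > 0"
  shows "\<exists>n\<ge>n0. f n < B"
proof -
  have descent: "\<exists>n\<ge>n0. f n \<le> f n0 - real N * d" for N
  proof (induction N)
    case 0
    show ?case by auto
  next
    case (Suc N)
    then obtain n where n: "n0 \<le> n" "f n \<le> f n0 - real N * d" by blast
    then obtain m where m: "n \<le> m" "f (Suc m) \<le> f m - d" using drops by blast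
    have "f m \<le> f n" using antitone_from[where f=f, OF dec n(1) m(1)] .
    then have "f (Suc m) \<le> f n0 - real (Suc N) * d" using n(2) m(2) by (simp add: algebra_simps)
    moreover have "n0 \<le> Suc m" using n(1) m(1) by simp
    ultimately show ?case by blast
  qed
  obtain N :: nat where "f n0 - B < real N * d"
    using ex_less_of_nat_mult[OF d] by blast
  moreover obtain n where "n0 \<le> n" "f n \<le> f n0 - real N * d" using descent by blast
  ultimately show ?thesis by (intro exI[of _ n]) auto
qed

text \<open>Two sequences U >= P > 0 change only at
  "jumps", which occur infinitely often, and a jump turns (U, P) into (U', U) with
  U' <= a (U - P).  For a < 4 this is impossible: the ratio Q = U / P >= 1 never increases
  and drops at every jump by at least c / Q_{n0}, where c = a (4 - a) / 4.\<close>
lemma no_slow_jump_sequence: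
  fixes U P :: "nat \<Rightarrow> real" and a :: real
  assumes a: "0 < a" "a < 4"
    and pos: "\<And>n. n0 \<le> n \<Longrightarrow> 0 < P n \<and> P n \<le> U n"
    and jump: "\<And>n. n0 \<le> n \<Longrightarrow> J n \<Longrightarrow> P (Suc n) = U n \<and> U (Suc n) \<le> a * (U n - P n)"
    and still: "\<And>n. n0 \<le> n \<Longrightarrow> \<not> J n \<Longrightarrow> P (Suc n) = P n \<and> U (Suc n) = U n"
    and often: "\<And>n. \<exists>m\<ge>n. J m"
  shows False
proof -
  define Q where "Q n = U n / P n" for n
  define c where "c = a * (4 - a) / 4"
  have c: "0 < c" unfolding c_def using a by simp
  have Q_ge_1: "1 \<le> Q n" if "n0 \<le> n" for n
    using pos[OF that] unfolding Q_def by simp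
  have Q_jump: "Q (Suc n) \<le> Q n - c / Q n" if "n0 \<le> n" "J n" for n
  proof -
    have U: "0 < U n" using pos[OF that(1)] by linarith
    have "Q (Suc n) = U (Suc n) / U n" unfolding Q_def using jump[OF that] by simp
    also have "\<dots> \<le> a * (U n - P n) / U n"
      using jump[OF that] U by (simp add: divide_right_mono)
    also have "\<dots> = a - a / Q n" using U pos[OF that(1)] unfolding Q_def by (simp add: field_simps)
    also have "\<dots> \<le> Q n - c / Q n"
      using ratio_map_below_diagonal[of "Q n" a] Q_ge_1[OF that(1)] unfolding c_def by simp
    finally show ?thesis .
  qed
  have Q_dec: "Q (Suc n) \<le> Q n" if "n0 \<le> n" for n
  proof (cases "J n")
    case True
    have "0 \<le> c / Q n" using c Q_ge_1[OF that] by simp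
    then show ?thesis using Q_jump[OF that True] by simp
  next
    case False
    then show ?thesis unfolding Q_def using still[OF that] by simp
  qed
  have Q_drops: "\<exists>m\<ge>n. Q (Suc m) \<le> Q m - c / Q n0" if "n0 \<le> n" for n
  proof -
    obtain m where m: "n \<le> m" "J m" using often by blast
    have "n0 \<le> m" using m that by simp
    have "c / Q n0 \<le> c / Q m"
      using antitone_from[where f=Q, OF Q_dec order_refl \<open>n0 \<le> m\<close>] Q_ge_1[OF \<open>n0 \<le> m\<close>] c
      by (intro divide_left_mono) auto
    then show ?thesis using Q_jump[OF \<open>n0 \<le> m\<close> m(2)] m(1) by (intro exI[of _ m]) auto
  qed
  have "0 < c / Q n0" using c Q_ge_1[of n0] by simp
  from eventually_below[of n0 Q "c / Q n0" 1, OF Q_dec Q_drops this]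
  obtain n where "n0 \<le> n" "Q n < 1" by blast
  then show False using Q_ge_1 by fastforce
qed

text \<open>The jump total U and P = U - min_reach (the jump total before
  the last jump) satisfy the hypotheses of the previous lemma once the minimum reach
  exceeds lam: at a jump the new minimum reach is paid by the distance already explored.\<close>
lemma no_strategy_below_4:
  fixes a lam :: real
  assumes strat: "is_strategy x r" and lam: "lam > 0" and a: "0 < a" "a < 4"
    and explored: "\<And>n. sum x {1..n} \<le> a * max (min_reach x r n) lam"
  shows False
proof -
  let ?U = "jump_total x r" and ?m = "min_reach x r"
  define P where "P n = ?U n - ?m n" for n
  have P_Suc: "P (Suc n) = (if jump x r n then ?U n else P n)" for n
    using no_jump_Suc[of x r n] unfolding P_def by auto
  obtain n1 where n1: "lam < ?m n1" using min_reach_unbounded[OF strat] by blast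
  obtain n0 where n0: "n1 \<le> n0" "jump x r n0" using jumps_infinite[OF strat] by blast
  have m_large: "lam < ?m n" if "n1 \<le> n" for n using n1 min_reach_mono[OF that, of x r] by simp
  have U_large: "lam < ?U n" if "n1 \<le> n" for n
    using m_large[OF that] min_reach_le_jump_total[of x r n] by simp
  have jump_bound: "?U (Suc n) \<le> a * (?U n - P n)" if "jump x r n" "n1 \<le> n" for n
  proof -
    have "0 \<le> x i" if "1 \<le> i" for i using strat that unfolding is_strategy_def by fastforce
    then have "?U (Suc n) \<le> sum x {1..n} - max_reach x r n + ?m (Suc n)"
      using jump_total_le_explored[of x r n] that(1) by simp
    also have "\<dots> \<le> sum x {1..n}" using min_reach_Suc_le_max_reach[of x r n] by simp
    also have "\<dots> \<le> a * ?m n" using explored[of n] m_large[OF that(2)] by simp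
    finally show ?thesis unfolding P_def by simp
  qed
  have P_pos: "0 < P n" if "Suc n0 \<le> n" for n
    using that
  proof (induction n rule: dec_induct)
    case base show ?case using U_large[OF n0(1)] lam P_Suc[of n0] n0(2) by simp
  next
    case (step n) then show ?case using U_large[of n] lam P_Suc[of n] n0(1) by auto
  qed
  show False
  proof (rule no_slow_jump_sequence[OF a, of "Suc n0" P ?U "jump x r"])
    show "0 < P n \<and> P n \<le> ?U n" if "Suc n0 \<le> n" for n
      using P_pos[OF that] min_reach_nonneg[of x r n] unfolding P_def by simp
    show "P (Suc n) = ?U n \<and> ?U (Suc n) \<le> a * (?U n - P n)" if "Suc n0 \<le> n" "jump x r n" for n
      using P_Suc[of n] jump_bound[of n] that n0(1) by simp
    show "P (Suc n) = P n \<and> ?U (Suc n) = ?U n" if "\<not> jump x r n" for n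
      using P_Suc[of n] no_jump_Suc[of x r n] that by simp
    show "\<exists>m\<ge>n. jump x r m" for n using jumps_infinite[OF strat] .
  qed
qed

text \<open>No search strategy has competitive ratio below 9: a ratio bound C < 9 would give
  the exploration bound of the previous lemma with a = (C - 1) / 2 < 4.\<close>
theorem comp_ratio_ge_9:
  assumes strat: "is_strategy x r" and lam: "lam > 0" and t: "t \<ge> 0"
  shows "9 \<le> comp_ratio lam t x r"
proof (rule ccontr)
  assume "\<not> 9 \<le> comp_ratio lam t x r"
  then have "comp_ratio lam t x r < ereal 9" by simp
  then obtain C0 where C0: "comp_ratio lam t x r < ereal C0" "ereal C0 < ereal 9"
    using ereal_dense2 by blast
  define C where "C = max C0 8" \<comment> \<open>enlarged so that a = (C - 1) / 2 is positive\<close>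
  have C: "1 < C" "C < 9" using C0(2) unfolding C_def by auto
  have "search_cost t x r \<rho> D / D \<le> C" if "lam \<le> D" for \<rho> D
    using le_less_trans[OF ratio_le_comp_ratio[OF that, of t x r \<rho>] C0(1)]
    unfolding C_def by simp
  then have "2 * sum x {1..n} \<le> (C - 1) * max (min_reach x r n) lam" for n
    using prefix_bound[OF strat t lam C(1)] by blast
  then have "sum x {1..n} \<le> (C - 1) / 2 * max (min_reach x r n) lam" for n
    by (simp add: field_simps)
  then show False using no_strategy_below_4[OF strat lam, of "(C - 1) / 2"] C by simp
qed

theorem lemma1:
  fixes lam t s :: real and x :: "nat \<Rightarrow> real"
  assumes "lam > 0" and "t \<ge> 0" and "t / (2 * lam) \<le> 1"
    and "s = t / (2 * lam)"
    and "\<And>i. x i = (((1 - s) * real i + (1 + s)) * 2 ^ i - s) * lam"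
  shows "(\<forall>r. periodic_rays r \<longrightarrow> is_strategy x r \<and> comp_ratio lam t x r = 9) \<and>
         (\<forall>x' r'. is_strategy x' r' \<longrightarrow> 9 \<le> comp_ratio lam t x' r')"
proof -
  have x: "x = doubling_dist lam s" using assms(5) by (auto simp: doubling_dist_def)
  have t: "t = 2 * s * lam" using assms(1,4) by simp
  have s: "0 \<le> s" "s \<le> 1" using assms(1-4) by auto
  show ?thesis
    using doubling_is_strategy[OF assms(1) s] doubling_comp_ratio[OF assms(1) s]
      comp_ratio_ge_9[OF _ assms(1,2)] unfolding x t by blast
qed

end
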